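(* (1) $E^{\partial}_{FTP}$ is sound for bisimilarity on $T(\Sigma^{\partial}_{FTP})$, i.e. whenever $E^{\partial}_{FTP}\vdash s=t$ for closed $s,t\in T(\Sigma^{\partial}_{FTP})$ then $s\sim t$. (2) For every $t\in T(\Sigma^{\partial}_{FTP})$ there exists $t'\in T(\Sigma_{FTP})$ such that $E^{\partial}_{FTP}\vdash t=t'$.
   Context: Fix a finite nonempty set $\mathcal A$ of actions, a finite set $\mathcal P$ of predicates, a subset $\mathcal P^I\subseteq\mathcal P$ of implicit predicates, and for each $P\in\mathcal P^I$ a set $\mathcal A_P\subseteq\mathcal A$. $\Sigma_{FTP}$ consists of $\delta$, constants $\kappa_P$ ($P\in\mathcal P$), prefixes $a.\_$ ($a\in\mathcal A$), and binary $+$. $\Sigma^\partial_{FTP}$ extends it with a unary operation $\partial_{\mathcal B,\mathcal Q}$ for every $\mathcal B\subseteq\mathcal A$, $\mathcal Q\subseteq\mathcal P$. Semantics on closed terms: the least relations closed under: $a.x\xrightarrow{a}x$; $x\xrightarrow{a}x'\Rightarrow x+y\xrightarrow{a}x'$; $y\xrightarrow{a}y'\Rightarrow x+y\xrightarrow{a}y'$; $P\kappa_P$; $Px\Rightarrow P(x+y)$; $Py\Rightarrow P(x+y)$; $Px\Rightarrow P(a.x)$ for $P\in\mathcal P^I$, $a\in\mathcal A_P$; $x\xrightarrow{a}x'\Rightarrow \partial_{\mathcal B,\mathcal Q}(x)\xrightarrow{a}\partial_{\emptyset,\mathcal Q\cap\mathcal P^I}(x')$ if $a\notin\mathcal B$;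 $Px\Rightarrow P(\partial_{\mathcal B,\mathcal Q}(x))$ if $P\notin\mathcal Q$. Bisimulation: symmetric $R$ such that $(s,t)\in R$ and $s\xrightarrow{a}s'$ imply $t\xrightarrow{a}t'$ with $(s',t')\in R$, and $Ps$ implies $Pt$; $\sim$ is the union of all bisimulations. $E_{FTP}$: $x+y=y+x$, $(x+y)+z=x+(y+z)$, $x+x=x$, $x+\delta=x$, $a.(x+\kappa_P)=a.(x+\kappa_P)+\kappa_P$ ($P\in\mathcal P^I$, $a\in\mathcal A_P$). $E^\partial_{FTP}$ is $E_{FTP}$ plus, for all $\mathcal B,\mathcal Q$: $\partial_{\mathcal B,\mathcal Q}(\delta)=\delta$; $\partial_{\mathcal B,\mathcal Q}(\kappa_P)=\delta$ if $P\in\mathcal Q$; $\partial_{\mathcal B,\mathcal Q}(\kappa_P)=\kappa_P$ if $P\notin\mathcal Q$; $\partial_{\mathcal B,\mathcal Q}(a.x)=\sum_{P\notin\mathcal Q,\,P(a.x)}\kappa_P$ if $a\in\mathcal B$ (a schema: for each closed instance of $x$, the sum ranges over the predicates $P\notin\mathcal Q$ satisfied by $a.x$); $\partial_{\mathcal B,\mathcal Q}(a.x)=\partial_{\emptyset,\mathcal Q}(a.x)$ if $a\notin\mathcal B$; $\partial_{\emptyset,\mathcal Q}(a.x)=a.\partial_{\emptyset,\mathcal Q\cap\mathcal P^I}(x)$; $\partial_{\mathcal B,\mathcal Q}(x+y)=\partial_{\mathcal B,\mathcal Q}(x)+\partial_{\mathcal B,\mathcal Q}(y)$. $\vdash$ denotes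 derivability in equational logic. *)

theory Defs
  imports Main
begin

text \<open>Actions are a finite type 'a (automatically nonempty), predicates a finite type 'p.
  Dl = delta, Kp P = kappa_P, Pf a x = a.x, Pl = +, Enc B Q x = partial_{B,Q}(x).\<close>
datatype ('a, 'p) ftp =
    Var nat
  | Dl
  | Kp 'p
  | Pf 'a "('a, 'p) ftp"
  | Pl "('a, 'p) ftp" "('a, 'p) ftp"
  | Enc "'a set" "'p set" "('a, 'p) ftp"

fun closed :: "('a, 'p) ftp \<Rightarrow> bool" where
  "closed (Var n) = False"
| "closed Dl = True"
| "closed (Kp P) = True"
| "closed (Pf a x) = closed x"
| "closed (Pl x y) = (closed x \<and> closed y)"
| "closed (Enc B Q x) = closed x"

text \<open>Terms of the smaller signature Sigma_FTP (no encapsulation).\<close>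
fun basic :: "('a, 'p) ftp \<Rightarrow> bool" where
  "basic (Var n) = True"
| "basic Dl = True"
| "basic (Kp P) = True"
| "basic (Pf a x) = basic x"
| "basic (Pl x y) = (basic x \<and> basic y)"
| "basic (Enc B Q x) = False"

fun subst :: "(nat \<Rightarrow> ('a, 'p) ftp) \<Rightarrow> ('a, 'p) ftp \<Rightarrow> ('a, 'p) ftp" where
  "subst \<sigma> (Var n) = \<sigma> n"
| "subst \<sigma> Dl = Dl"
| "subst \<sigma> (Kp P) = Kp P"
| "subst \<sigma> (Pf a x) = Pf a (subst \<sigma> x)"
| "subst \<sigma> (Pl x y) = Pl (subst \<sigma> x) (subst \<sigma> y)"
| "subst \<sigma> (Enc B Q x) = Enc B Q (subst \<sigma> x)"

text \<open>Predicate satisfaction; PI = implicit predicates, AP P = the action set A_P.\<close>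
inductive sat :: "'p set \<Rightarrow> ('p \<Rightarrow> 'a set) \<Rightarrow> 'p \<Rightarrow> ('a, 'p) ftp \<Rightarrow> bool"
  for PI :: "'p set" and AP :: "'p \<Rightarrow> 'a set" where
  sat_kappa: "sat PI AP P (Kp P)"
| sat_plusL: "sat PI AP P x \<Longrightarrow> sat PI AP P (Pl x y)"
| sat_plusR: "sat PI AP P y \<Longrightarrow> sat PI AP P (Pl x y)"
| sat_pref: "sat PI AP P x \<Longrightarrow> P \<in> PI \<Longrightarrow> a \<in> AP P \<Longrightarrow> sat PI AP P (Pf a x)"
| sat_enc: "sat PI AP P x \<Longrightarrow> P \<notin> Q \<Longrightarrow> sat PI AP P (Enc B Q x)"

inductive step :: "'p set \<Rightarrow> ('a, 'p) ftp \<Rightarrow> 'a \<Rightarrow> ('a, 'p) ftp \<Rightarrow> bool"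
  for PI :: "'p set" where
  step_pref: "step PI (Pf a x) a x"
| step_plusL: "step PI x a x' \<Longrightarrow> step PI (Pl x y) a x'"
| step_plusR: "step PI y a y' \<Longrightarrow> step PI (Pl x y) a y'"
| step_enc: "step PI x a x' \<Longrightarrow> a \<notin> B \<Longrightarrow> step PI (Enc B Q x) a (Enc {} (Q \<inter> PI) x')"

definition is_bisimulation ::
  "'p set \<Rightarrow> ('p \<Rightarrow> 'a set) \<Rightarrow> (('a, 'p) ftp \<times> ('a, 'p) ftp) set \<Rightarrow> bool" where
  "is_bisimulation PI AP R \<longleftrightarrow> sym R \<and>
     (\<forall>s t. (s, t) \<in> R \<longrightarrow>
        (\<forall>a s'. step PI s a s' \<longrightarrow> (\<exists>t'. step PI t a t' \<and> (s', t') \<in> R)) \<and>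
        (\<forall>P. sat PI AP P s \<longrightarrow> sat PI AP P t))"

definition bisim :: "'p set \<Rightarrow> ('p \<Rightarrow> 'a set) \<Rightarrow> ('a, 'p) ftp \<Rightarrow> ('a, 'p) ftp \<Rightarrow> bool" where
  "bisim PI AP s t \<longleftrightarrow> (\<exists>R. is_bisimulation PI AP R \<and> (s, t) \<in> R)"

fun sumK :: "'p list \<Rightarrow> ('a, 'p) ftp" where
  "sumK [] = Dl"
| "sumK [P] = Kp P"
| "sumK (P # L) = Pl (Kp P) (sumK L)"

abbreviation "vx \<equiv> Var 0"
abbreviation "vy \<equiv> Var 1"
abbreviation "vz \<equiv> Var 2"

definition E_FTP :: "'p set \<Rightarrow> ('p \<Rightarrow> 'a set) \<Rightarrow> (('a, 'p) ftp \<times> ('a, 'p) ftp) set" where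
  "E_FTP PI AP =
     {(Pl vx vy, Pl vy vx), (Pl (Pl vx vy) vz, Pl vx (Pl vy vz)), (Pl vx vx, vx), (Pl vx Dl, vx)}
   \<union> {(Pf a (Pl vx (Kp P)), Pl (Pf a (Pl vx (Kp P))) (Kp P)) | a P. P \<in> PI \<and> a \<in> AP P}"

text \<open>The axioms of E^partial_FTP. The schema for a in B is instantiated for every closed x,
  the sum being over (any duplicate-free enumeration of) the predicates P not in Q with P(a.x).\<close>
definition E_part :: "'p set \<Rightarrow> ('p \<Rightarrow> 'a set) \<Rightarrow> (('a, 'p) ftp \<times> ('a, 'p) ftp) set" where
  "E_part PI AP = E_FTP PI AP
   \<union> {(Enc B Q Dl, Dl) | B Q. True}
   \<union> {(Enc B Q (Kp P), Dl) | B Q P. P \<in> Q}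
   \<union> {(Enc B Q (Kp P), Kp P) | B Q P. P \<notin> Q}
   \<union> {(Enc B Q (Pf a x), sumK L) | B Q a x L. a \<in> B \<and> closed x \<and> distinct L \<and>
          set L = {P. P \<notin> Q \<and> sat PI AP P (Pf a x)}}
   \<union> {(Enc B Q (Pf a vx), Enc {} Q (Pf a vx)) | B Q a. a \<notin> B}
   \<union> {(Enc {} Q (Pf a vx), Pf a (Enc {} (Q \<inter> PI) vx)) | Q a. True}
   \<union> {(Enc B Q (Pl vx vy), Pl (Enc B Q vx) (Enc B Q vy)) | B Q. True}"

inductive derivable :: "(('a, 'p) ftp \<times> ('a, 'p) ftp) set \<Rightarrow> ('a, 'p) ftp \<Rightarrow> ('a, 'p) ftp \<Rightarrow> bool"
  for E where
  d_ax: "(l, r) \<in> E \<Longrightarrow> derivable E (subst \<sigma> l) (subst \<sigma> r)"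
| d_refl: "derivable E t t"
| d_sym: "derivable E s t \<Longrightarrow> derivable E t s"
| d_trans: "derivable E s t \<Longrightarrow> derivable E t u \<Longrightarrow> derivable E s u"
| d_pref: "derivable E s t \<Longrightarrow> derivable E (Pf a s) (Pf a t)"
| d_plus: "derivable E s1 t1 \<Longrightarrow> derivable E s2 t2 \<Longrightarrow> derivable E (Pl s1 s2) (Pl t1 t2)"
| d_enc: "derivable E s t \<Longrightarrow> derivable E (Enc B Q s) (Enc B Q t)"

end

theory Submission
  imports Defs
begin

text \<open>Soundness: each axiom instance relates two terms with exactly the same outgoing
  transitions and the same predicates. Derivable equality is a congruence, and every congruence
  rule preserves "transitions match up to derivable equality, predicates coincide", so derivable
  equality is itself a bisimulation.
  Elimination: an innermost encapsulation of a basic closed term is pushed through sums and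
  unblocked prefixes, disappears on constants, and at a blocked prefix is replaced by the
  (finite) sum of the predicates it still satisfies.\<close>

lemma subst_closed: "closed t \<Longrightarrow> subst \<sigma> t = t"
  by (induction t) auto

lemma subst_Var: "subst Var t = t"
  by (induction t) auto

lemma closed_sumK: "closed (sumK L)"
  and basic_sumK: "basic (sumK L)"
  by (induction L rule: sumK.induct) auto

inductive_simps step_simps:
  "step PI (Var n) a z" "step PI Dl a z" "step PI (Kp P) a z" "step PI (Pf b x) a z"
  "step PI (Pl x y) a z" "step PI (Enc B Q x) a z"

inductive_simps sat_simps:
  "sat PI AP P (Var n)" "sat PI AP P Dl" "sat PI AP P (Kp P')" "sat PI AP P (Pf b x)"
  "sat PI AP P (Pl x y)" "sat PI AP P (Enc B Q x)"

lemma sumK_no_step: "\<not> step PI (sumK L) a z"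
  by (induction L rule: sumK.induct) (auto simp: step_simps)

lemma sat_sumK_iff: "sat PI AP P (sumK L) \<longleftrightarrow> P \<in> set L"
  by (induction L rule: sumK.induct) (auto simp: sat_simps)

definition same_behaviour :: "'p set \<Rightarrow> ('p \<Rightarrow> 'a set) \<Rightarrow> ('a, 'p) ftp \<Rightarrow> ('a, 'p) ftp \<Rightarrow> bool" where
  "same_behaviour PI AP s t \<longleftrightarrow>
     (\<forall>a u. step PI s a u \<longleftrightarrow> step PI t a u) \<and> (\<forall>P. sat PI AP P s \<longleftrightarrow> sat PI AP P t)"

lemma same_behaviour_E_part:
  assumes "(l, r) \<in> E_part PI AP"
  shows "same_behaviour PI AP (subst \<sigma> l) (subst \<sigma> r)"
  using assms unfolding E_part_def E_FTP_def same_behaviour_def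
  by (auto simp: step_simps sat_simps subst_closed closed_sumK sumK_no_step sat_sumK_iff)

definition transfers ::
  "'p set \<Rightarrow> ('p \<Rightarrow> 'a set) \<Rightarrow> (('a, 'p) ftp \<Rightarrow> ('a, 'p) ftp \<Rightarrow> bool) \<Rightarrow>
   ('a, 'p) ftp \<Rightarrow> ('a, 'p) ftp \<Rightarrow> bool" where
  "transfers PI AP R s t \<longleftrightarrow>
     (\<forall>a s'. step PI s a s' \<longrightarrow> (\<exists>t'. step PI t a t' \<and> R s' t')) \<and>
     (\<forall>a t'. step PI t a t' \<longrightarrow> (\<exists>s'. step PI s a s' \<and> R s' t')) \<and>
     (\<forall>P. sat PI AP P s \<longleftrightarrow> sat PI AP P t)"

lemma transfers_if_same_behaviour:
  "same_behaviour PI AP s t \<Longrightarrow> transfers PI AP (derivable E) s t"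
  unfolding same_behaviour_def transfers_def by (meson derivable.d_refl)

lemma transfers_sym:
  "transfers PI AP (derivable E) s t \<Longrightarrow> transfers PI AP (derivable E) t s"
  unfolding transfers_def by (blast intro: derivable.d_sym)

lemma transfers_trans:
  "transfers PI AP (derivable E) s t \<Longrightarrow> transfers PI AP (derivable E) t u \<Longrightarrow>
   transfers PI AP (derivable E) s u"
  unfolding transfers_def by (meson derivable.d_trans)

lemma transfers_Pf:
  "derivable E s t \<Longrightarrow> transfers PI AP (derivable E) s t \<Longrightarrow>
   transfers PI AP (derivable E) (Pf a s) (Pf a t)"
  unfolding transfers_def by (simp add: step_simps sat_simps)

lemma transfers_Pl:
  "transfers PI AP (derivable E) s1 t1 \<Longrightarrow> transfers PI AP (derivable E) s2 t2 \<Longrightarrow>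
   transfers PI AP (derivable E) (Pl s1 s2) (Pl t1 t2)"
  unfolding transfers_def step_simps sat_simps by blast

lemma transfers_Enc:
  "transfers PI AP (derivable E) s t \<Longrightarrow>
   transfers PI AP (derivable E) (Enc B Q s) (Enc B Q t)"
  unfolding transfers_def step_simps sat_simps by (blast intro: derivable.d_enc)

lemma derivable_transfers:
  assumes sound: "\<And>l r \<sigma>. (l, r) \<in> E \<Longrightarrow> same_behaviour PI AP (subst \<sigma> l) (subst \<sigma> r)"
    and "derivable E s t"
  shows "transfers PI AP (derivable E) s t"
  using \<open>derivable E s t\<close>
proof (induction rule: derivable.induct)
  case (d_ax l r \<sigma>)
  then show ?case by (intro transfers_if_same_behaviour sound)
next
  case (d_refl t)
  show ?case by (rule transfers_if_same_behaviour) (simp add: same_behaviour_def)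
qed (blast intro: transfers_sym transfers_trans transfers_Pf transfers_Pl transfers_Enc)+

theorem derivable_bisim:
  assumes "\<And>l r \<sigma>. (l, r) \<in> E \<Longrightarrow> same_behaviour PI AP (subst \<sigma> l) (subst \<sigma> r)"
    and "derivable E s t"
  shows "bisim PI AP s t"
proof -
  let ?R = "{(s, t). derivable E s t}"
  have "sym ?R"
    by (auto simp: sym_def intro: derivable.d_sym)
  moreover have "transfers PI AP (derivable E) s t" if "(s, t) \<in> ?R" for s t
    using derivable_transfers[OF assms(1)] that by blast
  ultimately have "is_bisimulation PI AP ?R"
    unfolding is_bisimulation_def transfers_def by auto
  with assms(2) show ?thesis
    unfolding bisim_def by blast
qed

lemma derivable_axiom: "(l, r) \<in> E \<Longrightarrow> derivable E l r"
  using derivable.d_ax[of l r E Var] by (simp add: subst_Var)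

lemma derivable_Enc_Dl: "derivable (E_part PI AP) (Enc B Q Dl) Dl"
  by (rule derivable_axiom) (simp add: E_part_def)

lemma derivable_Enc_Kp_blocked: "P \<in> Q \<Longrightarrow> derivable (E_part PI AP) (Enc B Q (Kp P)) Dl"
  by (rule derivable_axiom) (simp add: E_part_def)

lemma derivable_Enc_Kp: "P \<notin> Q \<Longrightarrow> derivable (E_part PI AP) (Enc B Q (Kp P)) (Kp P)"
  by (rule derivable_axiom) (simp add: E_part_def)

lemma derivable_Enc_Pf_blocked:
  assumes "a \<in> B" "closed x" "distinct L" "set L = {P. P \<notin> Q \<and> sat PI AP P (Pf a x)}"
  shows "derivable (E_part PI AP) (Enc B Q (Pf a x)) (sumK L)"
  unfolding E_part_def
  by (rule derivable_axiom, rule UnI1, rule UnI1, rule UnI1, rule UnI2) (use assms in auto)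

lemma derivable_Enc_Pf:
  assumes "a \<notin> B"
  shows "derivable (E_part PI AP) (Enc B Q (Pf a x)) (Pf a (Enc {} (Q \<inter> PI) x))"
proof -
  have "(Enc B Q (Pf a vx), Enc {} Q (Pf a vx)) \<in> E_part PI AP"
    using assms by (simp add: E_part_def)
  from derivable.d_ax[OF this, of "\<lambda>_. x"]
  have "derivable (E_part PI AP) (Enc B Q (Pf a x)) (Enc {} Q (Pf a x))"
    by simp
  moreover have "(Enc {} Q (Pf a vx), Pf a (Enc {} (Q \<inter> PI) vx)) \<in> E_part PI AP"
    by (simp add: E_part_def)
  from derivable.d_ax[OF this, of "\<lambda>_. x"]
  have "derivable (E_part PI AP) (Enc {} Q (Pf a x)) (Pf a (Enc {} (Q \<inter> PI) x))"
    by simp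
  ultimately show ?thesis
    by (rule derivable.d_trans)
qed

lemma derivable_Enc_Pl:
  "derivable (E_part PI AP) (Enc B Q (Pl x y)) (Pl (Enc B Q x) (Enc B Q y))"
proof -
  have "(Enc B Q (Pl vx vy), Pl (Enc B Q vx) (Enc B Q vy)) \<in> E_part PI AP"
    by (simp add: E_part_def)
  from derivable.d_ax[OF this, of "\<lambda>n. if n = 0 then x else y"] show ?thesis
    by simp
qed

lemma Enc_basic_eliminable:
  fixes u :: "('a, 'p::finite) ftp"
  assumes "closed u" "basic u"
  shows "\<exists>v. closed v \<and> basic v \<and> derivable (E_part PI AP) (Enc B Q u) v"
  using assms
proof (induction u arbitrary: B Q)
  case Dl
  show ?case
    using derivable_Enc_Dl by (intro exI[of _ Dl]) simp
next
  case (Kp P)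
  show ?case
  proof (cases "P \<in> Q")
    case True
    then show ?thesis
      using derivable_Enc_Kp_blocked by (intro exI[of _ Dl]) simp
  next
    case False
    then show ?thesis
      using derivable_Enc_Kp by (intro exI[of _ "Kp P"]) simp
  qed
next
  case (Pf a x)
  show ?case
  proof (cases "a \<in> B")
    case True
    obtain L where "distinct L" "set L = {P. P \<notin> Q \<and> sat PI AP P (Pf a x)}"
      using finite_distinct_list[OF finite_class.finite] by metis
    with True Pf.prems have "derivable (E_part PI AP) (Enc B Q (Pf a x)) (sumK L)"
      by (intro derivable_Enc_Pf_blocked) simp_all
    then show ?thesis
      using closed_sumK basic_sumK by blast
  next
    case False
    obtain v where v: "closed v" "basic v" "derivable (E_part PI AP) (Enc {} (Q \<inter> PI) x) v"
      using Pf.IH Pf.prems by auto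
    have "derivable (E_part PI AP) (Enc B Q (Pf a x)) (Pf a v)"
      using derivable_Enc_Pf[OF False] derivable.d_pref[OF v(3)] by (rule derivable.d_trans)
    with v show ?thesis
      by (intro exI[of _ "Pf a v"]) simp
  qed
next
  case (Pl x y)
  obtain v where v: "closed v" "basic v" "derivable (E_part PI AP) (Enc B Q x) v"
    using Pl.IH(1) Pl.prems by auto
  obtain w where w: "closed w" "basic w" "derivable (E_part PI AP) (Enc B Q y) w"
    using Pl.IH(2) Pl.prems by auto
  have "derivable (E_part PI AP) (Enc B Q (Pl x y)) (Pl v w)"
    using derivable_Enc_Pl derivable.d_plus[OF v(3) w(3)] by (rule derivable.d_trans)
  with v w show ?case
    by (intro exI[of _ "Pl v w"]) simp
qed simp_all

lemma closed_eliminable: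
  fixes t :: "('a, 'p::finite) ftp"
  assumes "closed t"
  shows "\<exists>t'. closed t' \<and> basic t' \<and> derivable (E_part PI AP) t t'"
  using assms
proof (induction t)
  case Dl
  show ?case by (intro exI[of _ Dl]) (simp add: derivable.d_refl)
next
  case (Kp P)
  show ?case by (intro exI[of _ "Kp P"]) (simp add: derivable.d_refl)
next
  case (Pf a x)
  then show ?case by (meson basic.simps(4) closed.simps(4) derivable.d_pref)
next
  case (Pl x y)
  then show ?case by (meson basic.simps(5) closed.simps(5) derivable.d_plus)
next
  case (Enc B Q x)
  then obtain u where "closed u" "basic u" "derivable (E_part PI AP) x u"
    by auto
  then show ?case
    using Enc_basic_eliminable derivable.d_enc derivable.d_trans by meson
qed simp

theorem theorem2:
  fixes PI :: "'p::finite set" and AP :: "'p \<Rightarrow> 'a::finite set"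
  shows "(\<forall>s t :: ('a, 'p) ftp. closed s \<and> closed t \<and> derivable (E_part PI AP) s t
            \<longrightarrow> bisim PI AP s t)
       \<and> (\<forall>t :: ('a, 'p) ftp. closed t \<longrightarrow>
            (\<exists>t'. closed t' \<and> basic t' \<and> derivable (E_part PI AP) t t'))"
  using derivable_bisim[OF same_behaviour_E_part] closed_eliminable by blast

end
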